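(* Let $(\mathcal G_A,p^A)$ and $(\mathcal G_B,p^B)$ be CPS's on the finite set $\Omega$ (satisfying the standing assumptions), each satisfying certainty reflection and being $1$-closed. Fix an event $E$ and $q_A,q_B\in[0,1]$. Then for all $n\ge0$, $A^n$ is $A$-saturated and $B^n$ is $B$-saturated; moreover $C^\infty$ is both $A$-saturated and $B$-saturated.
   Context: $\Omega$ is a finite set; every subset is an event. A CPS is a pair $(\mathcal G,p)$ where $\mathcal G$ is a family of nonempty subsets of $\Omega$ and $p$ assigns to each $G\in\mathcal G$ a probability measure $p_G$ on $\Omega$ with $p_G(G)=1$ and $p_G(E)=p_G(F)p_F(E)$ whenever $E\subseteq F\subseteq G$, $F,G\in\mathcal G$. Standing assumption: each conditioning family is closed under unions and nonempty intersections and covers $\Omega$. Atom: $m_i(\omega)=\bigcap\{G\in\mathcal G_i:\omega\in G\}$. $(\mathcal G_i,p^i)$ is $1$-closed if every $L\subseteq G$ with $G\in\mathcal G_i$ and $p^i_G(L)=1$ belongs to $\mathcal G_i$. Certainty reflection: for every event $E$, $q\in[0,1]$, $\omega$: $p^i_{m_i(\omega)}(E)=q$ implies $p^i_{m_i(\omega)}(\{\omega':p^i_{m_i(\omega')}(E)=q\})=1$. An event $F$ is $i$-saturated if $\omega\in F$ implies $m_i(\omega)\subseteq F$. $C_i(F)=\{\omega:p^i_{m_i(\omega)}(F)=1\}$. $A^0=\{\omega:p^A_{m_A(\omega)}(E)=q_A\}$, $B^0=\{\omega:p^B_{m_B(\omega)}(E)=q_B\}$, $A^{n+1}=A^n\cap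 C_A(B^n)$, $B^{n+1}=B^n\cap C_B(A^n)$, $C^\infty=\bigcap_{n\ge0}A^n\cap\bigcap_{n\ge0}B^n$. *)

theory Defs
  imports "HOL-Probability.Probability_Mass_Function"
begin

text \<open>Omega is the universe of a finite type 'w; every subset is an event.
  A CPS is a family Gs of conditioning events together with a map p assigning
  to each conditioning event a probability measure (a pmf) on Omega.
  Only the values of p on members of Gs are meaningful.\<close>

definition cprob :: "('w set \<Rightarrow> 'w pmf) \<Rightarrow> 'w set \<Rightarrow> 'w set \<Rightarrow> real" where
  "cprob p G E = measure_pmf.prob (p G) E"

definition is_cps :: "'w set set \<Rightarrow> ('w set \<Rightarrow> 'w pmf) \<Rightarrow> bool" where
  "is_cps Gs p \<longleftrightarrow>
     (\<forall>G\<in>Gs. G \<noteq> {}) \<and>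
     (\<forall>G\<in>Gs. cprob p G G = 1) \<and>
     (\<forall>E F G. E \<subseteq> F \<longrightarrow> F \<subseteq> G \<longrightarrow> F \<in> Gs \<longrightarrow> G \<in> Gs \<longrightarrow>
        cprob p G E = cprob p G F * cprob p F E)"

definition standing :: "'w set set \<Rightarrow> bool" where
  "standing Gs \<longleftrightarrow>
     (\<forall>F\<in>Gs. \<forall>G\<in>Gs. F \<union> G \<in> Gs) \<and>
     (\<forall>F\<in>Gs. \<forall>G\<in>Gs. F \<inter> G \<noteq> {} \<longrightarrow> F \<inter> G \<in> Gs) \<and>
     \<Union>Gs = UNIV"

definition atom :: "'w set set \<Rightarrow> 'w \<Rightarrow> 'w set" where
  "atom Gs \<omega> = \<Inter>{G\<in>Gs. \<omega> \<in> G}"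

definition one_closed :: "'w set set \<Rightarrow> ('w set \<Rightarrow> 'w pmf) \<Rightarrow> bool" where
  "one_closed Gs p \<longleftrightarrow> (\<forall>G\<in>Gs. \<forall>L. L \<subseteq> G \<longrightarrow> cprob p G L = 1 \<longrightarrow> L \<in> Gs)"

definition certainty_reflection :: "'w set set \<Rightarrow> ('w set \<Rightarrow> 'w pmf) \<Rightarrow> bool" where
  "certainty_reflection Gs p \<longleftrightarrow>
     (\<forall>E q \<omega>. cprob p (atom Gs \<omega>) E = q \<longrightarrow>
        cprob p (atom Gs \<omega>) {\<omega>'. cprob p (atom Gs \<omega>') E = q} = 1)"

definition saturated :: "'w set set \<Rightarrow> 'w set \<Rightarrow> bool" where
  "saturated Gs F \<longleftrightarrow> (\<forall>\<omega>\<in>F. atom Gs \<omega> \<subseteq> F)"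

definition certain :: "'w set set \<Rightarrow> ('w set \<Rightarrow> 'w pmf) \<Rightarrow> 'w set \<Rightarrow> 'w set" where
  "certain Gs p F = {\<omega>. cprob p (atom Gs \<omega>) F = 1}"

primrec AB :: "'w set set \<Rightarrow> ('w set \<Rightarrow> 'w pmf) \<Rightarrow> 'w set set \<Rightarrow> ('w set \<Rightarrow> 'w pmf)
               \<Rightarrow> 'w set \<Rightarrow> real \<Rightarrow> real \<Rightarrow> nat \<Rightarrow> 'w set \<times> 'w set" where
  "AB GA pA GB pB E qA qB 0 =
     ({\<omega>. cprob pA (atom GA \<omega>) E = qA}, {\<omega>. cprob pB (atom GB \<omega>) E = qB})"
| "AB GA pA GB pB E qA qB (Suc n) =
     (let (An, Bn) = AB GA pA GB pB E qA qB n
      in (An \<inter> certain GA pA Bn, Bn \<inter> certain GB pB An))"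

definition A_iter where "A_iter GA pA GB pB E qA qB n = fst (AB GA pA GB pB E qA qB n)"
definition B_iter where "B_iter GA pA GB pB E qA qB n = snd (AB GA pA GB pB E qA qB n)"

definition Cinf where
  "Cinf GA pA GB pB E qA qB =
     (\<Inter>n. A_iter GA pA GB pB E qA qB n) \<inter> (\<Inter>n. B_iter GA pA GB pB E qA qB n)"

end

theory Submission
  imports Defs
begin

(* Closure under nonempty intersections makes the atom m(w) the least conditioning
   event containing w.  If w is in F and p_m(w)(F) = 1, then F \<inter> m(w) is certain given
   m(w), hence by 1-closedness a conditioning event containing w, so m(w) \<subseteq> F.  Thus an
   event certain at each of its points is saturated.  Certainty reflection says exactly
   this for the level sets {w. p_m(w)(E) = q}, among them the sets C_i(F); as
   saturation is preserved by intersections, all A^n and B^n are saturated.  At a point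
   of C^infty, which lies in every A^(n+1), agent A is certain of every B^n, so A's atom
   lies in every B^n as well as in every A^n; symmetrically for B. *)

lemma cprob_Int_eq_1:
  assumes "cprob p G A = 1" "cprob p G B = 1"
  shows "cprob p G (A \<inter> B) = 1"
  using assms by (simp add: cprob_def measure_pmf.prob_eq_1 AE_conj_iff)

lemma standing_Inter_mem:
  assumes "standing Gs" "finite S" "S \<noteq> {}" "S \<subseteq> Gs" "w \<in> \<Inter>S"
  shows "\<Inter>S \<in> Gs"
  using assms(2-5)
proof (induction S rule: finite_ne_induct)
  case (singleton G)
  then show ?case by simp
next
  case (insert G S)
  then have "G \<in> Gs" "\<Inter>S \<in> Gs" "G \<inter> \<Inter>S \<noteq> {}"
    by auto
  then have "G \<inter> \<Inter>S \<in> Gs"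
    using assms(1) unfolding standing_def by blast
  then show ?case by simp
qed

lemma atom_mem:
  fixes Gs :: "('w::finite) set set"
  assumes "standing Gs"
  shows "atom Gs w \<in> Gs"
proof -
  have "w \<in> \<Union>Gs"
    using assms by (simp add: standing_def)
  then have "{G \<in> Gs. w \<in> G} \<noteq> {}" by blast
  then show ?thesis
    unfolding atom_def by (intro standing_Inter_mem[OF assms]) auto
qed

lemma atom_subset_if_certain:
  fixes Gs :: "('w::finite) set set"
  assumes "is_cps Gs p" "standing Gs" "one_closed Gs p"
    and "w \<in> F" "cprob p (atom Gs w) F = 1"
  shows "atom Gs w \<subseteq> F"
proof -
  have atom: "atom Gs w \<in> Gs"
    using assms(2) by (rule atom_mem)
  then have "cprob p (atom Gs w) (atom Gs w) = 1"
    using assms(1) unfolding is_cps_def by blast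
  with assms(5) have "cprob p (atom Gs w) (F \<inter> atom Gs w) = 1"
    by (rule cprob_Int_eq_1)
  with atom assms(3) have "F \<inter> atom Gs w \<in> Gs"
    unfolding one_closed_def by blast
  moreover have "w \<in> F \<inter> atom Gs w"
    using assms(4) by (simp add: atom_def)
  ultimately have "atom Gs w \<subseteq> F \<inter> atom Gs w"
    by (auto simp: atom_def)
  then show ?thesis by blast
qed

lemma saturated_if_subset_certain:
  fixes Gs :: "('w::finite) set set"
  assumes "is_cps Gs p" "standing Gs" "one_closed Gs p"
    and "F \<subseteq> certain Gs p F"
  shows "saturated Gs F"
  unfolding saturated_def
proof
  fix w assume "w \<in> F"
  moreover from this assms(4) have "cprob p (atom Gs w) F = 1"
    by (auto simp: certain_def)
  ultimately show "atom Gs w \<subseteq> F"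
    by (rule atom_subset_if_certain[OF assms(1-3)])
qed

lemma saturated_level_set:
  fixes Gs :: "('w::finite) set set"
  assumes "is_cps Gs p" "standing Gs" "one_closed Gs p" "certainty_reflection Gs p"
  shows "saturated Gs {w. cprob p (atom Gs w) E = q}"
  using assms(4)
  by (intro saturated_if_subset_certain[OF assms(1-3)])
    (auto simp: certainty_reflection_def certain_def)

lemma saturated_certain:
  fixes Gs :: "('w::finite) set set"
  assumes "is_cps Gs p" "standing Gs" "one_closed Gs p" "certainty_reflection Gs p"
  shows "saturated Gs (certain Gs p F)"
  unfolding certain_def using assms by (rule saturated_level_set)

lemma saturated_Int:
  "saturated Gs F \<Longrightarrow> saturated Gs F' \<Longrightarrow> saturated Gs (F \<inter> F')"
  unfolding saturated_def by blast

lemma A_iter_Suc: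
  "A_iter GA pA GB pB E qA qB (Suc n) =
     A_iter GA pA GB pB E qA qB n \<inter> certain GA pA (B_iter GA pA GB pB E qA qB n)"
  by (simp add: A_iter_def B_iter_def split: prod.splits)

lemma B_iter_Suc:
  "B_iter GA pA GB pB E qA qB (Suc n) =
     B_iter GA pA GB pB E qA qB n \<inter> certain GB pB (A_iter GA pA GB pB E qA qB n)"
  by (simp add: A_iter_def B_iter_def split: prod.splits)

lemma saturated_A_iter:
  fixes GA :: "('w::finite) set set"
  assumes "is_cps GA pA" "standing GA" "one_closed GA pA" "certainty_reflection GA pA"
  shows "saturated GA (A_iter GA pA GB pB E qA qB n)"
proof (induction n)
  case 0
  show ?case
    using saturated_level_set[OF assms] by (simp add: A_iter_def)
next
  case (Suc n)
  then show ?case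
    unfolding A_iter_Suc by (intro saturated_Int saturated_certain[OF assms])
qed

lemma saturated_B_iter:
  fixes GB :: "('w::finite) set set"
  assumes "is_cps GB pB" "standing GB" "one_closed GB pB" "certainty_reflection GB pB"
  shows "saturated GB (B_iter GA pA GB pB E qA qB n)"
proof (induction n)
  case 0
  show ?case
    using saturated_level_set[OF assms] by (simp add: B_iter_def)
next
  case (Suc n)
  then show ?case
    unfolding B_iter_Suc by (intro saturated_Int saturated_certain[OF assms])
qed

lemma saturated_INT_Int_INT:
  fixes Gs :: "('w::finite) set set"
  assumes "is_cps Gs p" "standing Gs" "one_closed Gs p"
    and "\<And>n. saturated Gs (X n)" "\<And>n. X (Suc n) \<subseteq> certain Gs p (Y n)"
  shows "saturated Gs ((\<Inter>n. X n) \<inter> (\<Inter>n. Y n))"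
  unfolding saturated_def
proof
  fix w assume w: "w \<in> (\<Inter>n. X n) \<inter> (\<Inter>n. Y n)"
  have "atom Gs w \<subseteq> X n" for n
    using assms(4) w unfolding saturated_def by blast
  moreover have "atom Gs w \<subseteq> Y n" for n
  proof (rule atom_subset_if_certain[OF assms(1-3)])
    show "w \<in> Y n" using w by blast
    show "cprob p (atom Gs w) (Y n) = 1"
      using assms(5)[of n] w unfolding certain_def by blast
  qed
  ultimately show "atom Gs w \<subseteq> (\<Inter>n. X n) \<inter> (\<Inter>n. Y n)" by blast
qed

theorem lemma3:
  fixes GA GB :: "('w::finite) set set"
    and pA pB :: "'w set \<Rightarrow> 'w pmf"
    and E :: "'w set" and qA qB :: real
  assumes "is_cps GA pA" and "standing GA"
    and "is_cps GB pB" and "standing GB"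
    and "certainty_reflection GA pA" and "one_closed GA pA"
    and "certainty_reflection GB pB" and "one_closed GB pB"
    and "0 \<le> qA" and "qA \<le> 1" and "0 \<le> qB" and "qB \<le> 1"
  shows "(\<forall>n. saturated GA (A_iter GA pA GB pB E qA qB n)
             \<and> saturated GB (B_iter GA pA GB pB E qA qB n))
         \<and> saturated GA (Cinf GA pA GB pB E qA qB)
         \<and> saturated GB (Cinf GA pA GB pB E qA qB)"
proof -
  let ?A = "A_iter GA pA GB pB E qA qB" and ?B = "B_iter GA pA GB pB E qA qB"
  have A: "saturated GA (?A n)" for n
    using saturated_A_iter[OF assms(1,2,6,5)] .
  have B: "saturated GB (?B n)" for n
    using saturated_B_iter[OF assms(3,4,8,7)] .
  have "saturated GA ((\<Inter>n. ?A n) \<inter> (\<Inter>n. ?B n))"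
    by (rule saturated_INT_Int_INT[OF assms(1,2,6) A]) (simp add: A_iter_Suc)
  moreover have "saturated GB ((\<Inter>n. ?B n) \<inter> (\<Inter>n. ?A n))"
    by (rule saturated_INT_Int_INT[OF assms(3,4,8) B]) (simp add: B_iter_Suc)
  ultimately show ?thesis
    using A B by (simp add: Cinf_def Int_commute)
qed

end
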